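(* Let $k$ be a field, $A,B$ abelian groups, $R$ an $A$-graded $k$-algebra and $t:A\times B\to k^\times$ a bicharacter. For $f\in\mathrm{HH}^m(R,R_{\hat b})^a$ and $f'\in\mathrm{HH}^{m'}(R,R_{\hat{b'}})^{a'}$ one has \[ f\smile_t f'=(-1)^{mm'}t(a',b)\,f'\smile_t f . \] In particular, $f\smile_t f'=0$ unless $t(a',b)=t(a,b')^{-1}$.
   Context: Bicharacter: $t(a+a',b)=t(a,b)t(a',b)$ and $t(a,b+b')=t(a,b)t(a,b')$. For $b\in B$, $\hat b$ is the algebra automorphism of $R$ with $\hat b(r)=t(a,b)r$ for $r\in R^a$. $R_{\hat b}$ is the $R$-bimodule $R$ with the usual left action and right action $x\cdot r=x\hat b(r)$. Hochschild cochains $C^m(R,R_{\hat b})=\mathrm{Hom}_k(R^{\otimes m},R)$ carry the standard Hochschild differential for the bimodule $R_{\hat b}$; a cochain has $A$-degree $a$ if it maps $(R^{\otimes m})^{a'}$ into $R^{a+a'}$, and $\mathrm{HH}^*(R,R_{\hat b})^a$ is the cohomology of the degree-$a$ subcomplex. Twisted cup product: for $f\in C^m(R,R_{\hat b})$ and $f'\in C^{m'}(R,R_{\hat{b'}})$, $f\smile_t f'\in C^{m+m'}(R,R_{\widehat{b+b'}})$ is \[(f\smile_tf')[r_1|\cdots|r_{m+m'}]=(-1)^{mm'}f[r_1|\cdots|r_m]\,\hat b\big(f'[r_{m+1}|\cdots|r_{m+m'}]\big);\] this induces an associative product on $\bigoplus_{b\in B}\mathrm{HH}^*(R,R_{\hat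 b})$. *)

theory Defs
  imports Main "HOL.Vector_Spaces"
begin

definition k_algebra :: "('k::field \<Rightarrow> 'r::ring_1 \<Rightarrow> 'r) \<Rightarrow> bool" where
  "k_algebra sm \<longleftrightarrow> vector_space sm \<and>
     (\<forall>c x y. sm c (x * y) = sm c x * y \<and> sm c (x * y) = x * sm c y)"

definition graded_k_algebra ::
  "('k::field \<Rightarrow> 'r::ring_1 \<Rightarrow> 'r) \<Rightarrow> ('a::ab_group_add \<Rightarrow> 'r set) \<Rightarrow> bool" where
  "graded_k_algebra sm Rg \<longleftrightarrow> k_algebra sm \<and>
     (\<forall>a. 0 \<in> Rg a \<and> (\<forall>x\<in>Rg a. \<forall>y\<in>Rg a. x + y \<in> Rg a) \<and> (\<forall>c. \<forall>x\<in>Rg a. sm c x \<in> Rg a)) \<and>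
     1 \<in> Rg 0 \<and>
     (\<forall>a a'. \<forall>x\<in>Rg a. \<forall>y\<in>Rg a'. x * y \<in> Rg (a + a')) \<and>
     (\<forall>r. \<exists>!c. finite {a. c a \<noteq> 0} \<and> (\<forall>a. c a \<in> Rg a) \<and> r = (\<Sum>a\<in>{a. c a \<noteq> 0}. c a))"

definition components :: "('a \<Rightarrow> 'r::ring_1 set) \<Rightarrow> 'r \<Rightarrow> 'a \<Rightarrow> 'r" where
  "components Rg r = (THE c. finite {a. c a \<noteq> 0} \<and> (\<forall>a. c a \<in> Rg a) \<and> r = (\<Sum>a\<in>{a. c a \<noteq> 0}. c a))"

definition bicharacter :: "('a::ab_group_add \<Rightarrow> 'b::ab_group_add \<Rightarrow> 'k::field) \<Rightarrow> bool" where
  "bicharacter t \<longleftrightarrow> (\<forall>a b. t a b \<noteq> 0) \<and>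
     (\<forall>a a' b. t (a + a') b = t a b * t a' b) \<and> (\<forall>a b b'. t a (b + b') = t a b * t a b')"

definition bhat :: "('k::field \<Rightarrow> 'r::ring_1 \<Rightarrow> 'r) \<Rightarrow> ('a \<Rightarrow> 'r set) \<Rightarrow> ('a \<Rightarrow> 'b \<Rightarrow> 'k) \<Rightarrow> 'b \<Rightarrow> 'r \<Rightarrow> 'r" where
  "bhat sm Rg t b r = (\<Sum>a\<in>{a. components Rg r a \<noteq> 0}. sm (t a b) (components Rg r a))"

text \<open>An m-cochain in C^m(R,M) = Hom_k(R^{\<otimes>m}, R) is represented (via the universal
  property of the tensor power) as a k-multilinear function of lists of length m;
  it is required to vanish on lists of any other length.\<close>
definition cochain :: "('k::field \<Rightarrow> 'r::ring_1 \<Rightarrow> 'r) \<Rightarrow> nat \<Rightarrow> ('r list \<Rightarrow> 'r) \<Rightarrow> bool" where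
  "cochain sm m f \<longleftrightarrow> (\<forall>xs. length xs \<noteq> m \<longrightarrow> f xs = 0) \<and>
     (\<forall>xs i x y c. length xs = m \<longrightarrow> i < m \<longrightarrow>
        f (xs[i := x + y]) = f (xs[i := x]) + f (xs[i := y]) \<and>
        f (xs[i := sm c x]) = sm c (f (xs[i := x])))"

definition cochain_deg :: "('a::ab_group_add \<Rightarrow> 'r::ring_1 set) \<Rightarrow> nat \<Rightarrow> 'a \<Rightarrow> ('r list \<Rightarrow> 'r) \<Rightarrow> bool" where
  "cochain_deg Rg m a f \<longleftrightarrow> (\<forall>xs ds. length xs = m \<longrightarrow> length ds = m \<longrightarrow>
      (\<forall>j<m. xs ! j \<in> Rg (ds ! j)) \<longrightarrow> f xs \<in> Rg (a + sum_list ds))"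

text \<open>Hochschild differential C^m(R,R_\<sigma>) \<rightarrow> C^{m+1}(R,R_\<sigma>) for the bimodule R_\<sigma>
  (usual left action, right action x\<cdot>r = x \<sigma>(r)).\<close>
definition hoch_diff :: "('r::ring_1 \<Rightarrow> 'r) \<Rightarrow> nat \<Rightarrow> ('r list \<Rightarrow> 'r) \<Rightarrow> 'r list \<Rightarrow> 'r" where
  "hoch_diff \<sigma> m f xs = (if length xs = Suc m then
      xs ! 0 * f (drop 1 xs)
      + (\<Sum>i\<in>{1..m}. (-1) ^ i * f (take (i - 1) xs @ [xs ! (i - 1) * xs ! i] @ drop (i + 1) xs))
      + (-1) ^ (Suc m) * (f (take m xs) * \<sigma> (xs ! m))
    else 0)"

definition hoch_cocycle ::
  "('k::field \<Rightarrow> 'r::ring_1 \<Rightarrow> 'r) \<Rightarrow> ('a::ab_group_add \<Rightarrow> 'r set) \<Rightarrow> ('r \<Rightarrow> 'r) \<Rightarrow> nat \<Rightarrow> 'a \<Rightarrow> ('r list \<Rightarrow> 'r) \<Rightarrow> bool" where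
  "hoch_cocycle sm Rg \<sigma> m a f \<longleftrightarrow> cochain sm m f \<and> cochain_deg Rg m a f \<and> hoch_diff \<sigma> m f = (\<lambda>_. 0)"

definition hoch_cohomologous ::
  "('k::field \<Rightarrow> 'r::ring_1 \<Rightarrow> 'r) \<Rightarrow> ('a::ab_group_add \<Rightarrow> 'r set) \<Rightarrow> ('r \<Rightarrow> 'r) \<Rightarrow> nat \<Rightarrow> 'a
     \<Rightarrow> ('r list \<Rightarrow> 'r) \<Rightarrow> ('r list \<Rightarrow> 'r) \<Rightarrow> bool" where
  "hoch_cohomologous sm Rg \<sigma> m a f g \<longleftrightarrow>
     (if m = 0 then f = g
      else (\<exists>h. cochain sm (m - 1) h \<and> cochain_deg Rg (m - 1) a h \<and>
                 (\<lambda>xs. f xs - g xs) = hoch_diff \<sigma> (m - 1) h))"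

definition twisted_cup ::
  "('k::field \<Rightarrow> 'r::ring_1 \<Rightarrow> 'r) \<Rightarrow> ('a \<Rightarrow> 'r set) \<Rightarrow> ('a \<Rightarrow> 'b \<Rightarrow> 'k) \<Rightarrow> nat \<Rightarrow> 'b \<Rightarrow> ('r list \<Rightarrow> 'r)
     \<Rightarrow> nat \<Rightarrow> ('r list \<Rightarrow> 'r) \<Rightarrow> 'r list \<Rightarrow> 'r" where
  "twisted_cup sm Rg t m b f m' f' xs = (if length xs = m + m' then
      (-1) ^ (m * m') * (f (take m xs) * bhat sm Rg t b (f' (drop m xs)))
    else 0)"

end

theory Submission
  imports Defs
begin

text \<open>For cocycles \<open>f \<in> C\<^sup>m(R, R\<^bsub>b\<^esub>)\<close> and \<open>f' \<in> C\<^sup>m\<^sup>'(R, R\<^bsub>b'\<^esub>)\<close> with \<open>m' \<ge> 1\<close>, the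
  difference \<open>f \<smile>\<^sub>t f' - (-1)\<^sup>m\<^sup>m\<^sup>' t(a',b) f' \<smile>\<^sub>t f\<close> is the coboundary of a multiple of the
  Gerstenhaber homotopy \<open>H = \<Sum>\<^sub>i\<^sub><\<^sub>m\<^sub>' (-1)\<^sup>i\<^sup>(\<^sup>m\<^sup>+\<^sup>1\<^sup>) f' \<circ>\<^sub>i f\<close>, where \<open>f' \<circ>\<^sub>i f\<close> feeds \<open>f\<close> into
  the \<open>i\<close>-th argument of \<open>f'\<close> and twists the arguments after it by \<open>b\<close>. In \<open>\<delta>H\<close> all summands cancel in
  pairs or assemble into values of \<open>\<delta>f\<close> and \<open>\<delta>f'\<close>, except the two products
  \<open>f(x\<^sub>1..x\<^sub>m) f'(b x\<^sub>m\<^sub>+\<^sub>1..b x\<^sub>m\<^sub>+\<^sub>m\<^sub>')\<close> and \<open>f'(x\<^sub>1..x\<^sub>m\<^sub>') b'(f(x\<^sub>m\<^sub>'\<^sub>+\<^sub>1..))\<close>. As \<open>f'\<close> has degree \<open>a'\<close>,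
  twisting all its arguments by \<open>b\<close> is the same as twisting its value and dividing by \<open>t(a',b)\<close>,
  which turns the first product into \<open>f \<smile>\<^sub>t f'\<close>. For \<open>m' = 0\<close> the identity holds on the nose, since a
  0-cocycle \<open>z\<close> satisfies \<open>x z = z b'(x)\<close>. Using the identity twice shows that
  \<open>(1 - t(a',b) t(a,b')) (f \<smile>\<^sub>t f')\<close> is a coboundary.\<close>

section \<open>Homogeneous components and the twists\<close>

definition homogeneous_decomposition :: "('a \<Rightarrow> 'r::ring_1 set) \<Rightarrow> ('a \<Rightarrow> 'r) \<Rightarrow> 'r \<Rightarrow> bool" where
  "homogeneous_decomposition Rg c r \<longleftrightarrow>
     finite {a. c a \<noteq> 0} \<and> (\<forall>a. c a \<in> Rg a) \<and> r = (\<Sum>a\<in>{a. c a \<noteq> 0}. c a)"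

locale twisted_graded_algebra =
  fixes sm :: "'k::field \<Rightarrow> 'r::ring_1 \<Rightarrow> 'r" and Rg :: "'a::ab_group_add \<Rightarrow> 'r set"
    and t :: "'a \<Rightarrow> 'b::ab_group_add \<Rightarrow> 'k"
  assumes graded: "graded_k_algebra sm Rg" and bicharacter: "bicharacter t"
begin

sublocale V: vector_space sm
  using graded unfolding graded_k_algebra_def k_algebra_def by auto

abbreviation twist :: "'b \<Rightarrow> 'r \<Rightarrow> 'r" where "twist b \<equiv> bhat sm Rg t b"
abbreviation component :: "'r \<Rightarrow> 'a \<Rightarrow> 'r" where "component r \<equiv> components Rg r"

definition supp :: "'r \<Rightarrow> 'a set" where "supp r = {a. component r a \<noteq> 0}"

lemma scale_mult_left: "sm c (x * y) = sm c x * y"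
  using graded unfolding graded_k_algebra_def k_algebra_def by blast

lemma scale_mult_right: "sm c (x * y) = x * sm c y"
  using graded unfolding graded_k_algebra_def k_algebra_def by blast

lemma Rg_zero: "0 \<in> Rg a"
  and Rg_add: "x \<in> Rg a \<Longrightarrow> y \<in> Rg a \<Longrightarrow> x + y \<in> Rg a"
  and Rg_scale: "x \<in> Rg a \<Longrightarrow> sm c x \<in> Rg a"
  and Rg_mult: "x \<in> Rg a \<Longrightarrow> y \<in> Rg a' \<Longrightarrow> x * y \<in> Rg (a + a')"
  using graded unfolding graded_k_algebra_def by auto

lemma Rg_sum: "(\<And>i. i \<in> I \<Longrightarrow> g i \<in> Rg a) \<Longrightarrow> sum g I \<in> Rg a"
  by (induction I rule: infinite_finite_induct) (auto simp: Rg_zero Rg_add)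

lemma homogeneous_decomposition_components: "homogeneous_decomposition Rg (component r) r"
proof -
  have "\<exists>!c. homogeneous_decomposition Rg c r"
    using graded unfolding graded_k_algebra_def homogeneous_decomposition_def by auto
  then show ?thesis
    unfolding components_def homogeneous_decomposition_def[abs_def] by (rule theI')
qed

lemma components_unique: "homogeneous_decomposition Rg c r \<Longrightarrow> component r = c"
  using graded homogeneous_decomposition_components[of r]
  unfolding graded_k_algebra_def homogeneous_decomposition_def by metis

lemma finite_supp: "finite (supp r)"
  and components_in_Rg: "component r a \<in> Rg a"
  and sum_components: "r = (\<Sum>a\<in>supp r. component r a)"
  using homogeneous_decomposition_components[of r]
  unfolding homogeneous_decomposition_def supp_def by auto

lemma sum_components_superset: "finite S \<Longrightarrow> supp r \<subseteq> S \<Longrightarrow> r = (\<Sum>a\<in>S. component r a)"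
  using sum_components[of r] by (simp add: sum.mono_neutral_right supp_def)

lemma components_eqI:
  assumes "finite S" "\<And>a. c a \<in> Rg a" "\<And>a. a \<notin> S \<Longrightarrow> c a = 0" "r = (\<Sum>a\<in>S. c a)"
  shows "component r = c"
proof (rule components_unique)
  have "{a. c a \<noteq> 0} \<subseteq> S" using assms(3) by blast
  moreover have "(\<Sum>a\<in>S. c a) = (\<Sum>a\<in>{a. c a \<noteq> 0}. c a)"
    using assms(1,3) by (intro sum.mono_neutral_cong_right) auto
  ultimately show "homogeneous_decomposition Rg c r"
    unfolding homogeneous_decomposition_def using assms by (auto intro: finite_subset)
qed

lemma components_homogeneous: "x \<in> Rg d \<Longrightarrow> component x = (\<lambda>a. if a = d then x else 0)"
  by (rule components_eqI[of "{d}"]) (auto simp: Rg_zero)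

lemma components_add: "component (x + y) = (\<lambda>a. component x a + component y a)"
proof (rule components_eqI[of "supp x \<union> supp y"])
  show "x + y = (\<Sum>a\<in>supp x \<union> supp y. component x a + component y a)"
    by (simp add: sum.distrib sum_components_superset[symmetric] finite_supp)
  show "component x a + component y a \<in> Rg a" for a by (simp add: Rg_add components_in_Rg)
qed (simp_all add: finite_supp supp_def[symmetric], simp_all add: supp_def)

lemma components_scale: "component (sm c x) = (\<lambda>a. sm c (component x a))"
proof (rule components_eqI[of "supp x"])
  show "sm c x = (\<Sum>a\<in>supp x. sm c (component x a))"
    by (subst sum_components) (simp add: V.scale_sum_right)
qed (auto simp: finite_supp Rg_scale components_in_Rg supp_def[symmetric], simp add: supp_def)

lemma twist_eq_sum: "finite S \<Longrightarrow> supp r \<subseteq> S \<Longrightarrow> twist b r = (\<Sum>a\<in>S. sm (t a b) (component r a))"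
  unfolding bhat_def supp_def[symmetric]
  by (rule sum.mono_neutral_left) (auto simp: supp_def)

lemma twist_homogeneous: "x \<in> Rg d \<Longrightarrow> twist b x = sm (t d b) x"
  by (subst twist_eq_sum[of "{d}"]) (auto simp: supp_def components_homogeneous)

lemma twist_in_Rg: "x \<in> Rg d \<Longrightarrow> twist b x \<in> Rg d"
  by (simp add: twist_homogeneous Rg_scale)

lemma twist_add: "twist b (x + y) = twist b x + twist b y"
proof -
  let ?S = "supp x \<union> supp y"
  have fin: "finite ?S" by (simp add: finite_supp)
  have "supp (x + y) \<subseteq> ?S" by (auto simp: supp_def components_add)
  then show ?thesis
    by (simp add: twist_eq_sum[OF fin] components_add V.scale_right_distrib sum.distrib)
qed

lemma twist_scale: "twist b (sm c x) = sm c (twist b x)"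
proof -
  have "supp (sm c x) \<subseteq> supp x" by (auto simp: supp_def components_scale)
  then have "twist b (sm c x) = (\<Sum>a\<in>supp x. sm (t a b) (component (sm c x) a))"
    by (rule twist_eq_sum[OF finite_supp])
  also have "\<dots> = sm c (\<Sum>a\<in>supp x. sm (t a b) (component x a))"
    by (simp add: components_scale V.scale_sum_right mult.commute)
  finally show ?thesis by (simp add: twist_eq_sum[OF finite_supp order_refl])
qed

lemma twist_zero: "twist b 0 = 0"
  using twist_scale[of b 0 0] by simp

lemma twist_sum: "twist b (sum g I) = (\<Sum>i\<in>I. twist b (g i))"
  by (induction I rule: infinite_finite_induct) (auto simp: twist_zero twist_add)

lemma t_add_left: "t (a + a') b = t a b * t a' b"
  and t_add_right: "t a (b + b') = t a b * t a b'"
  and t_nonzero: "t a b \<noteq> 0"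
  using bicharacter unfolding bicharacter_def by auto

lemma t_sum_list: "t (sum_list ds) b = (\<Prod>j<length ds. t (ds ! j) b)"
  using t_add_left[of 0 0 b] t_nonzero[of 0 b]
  by (induction ds) (simp_all add: prod.lessThan_Suc_shift t_add_left del: prod.lessThan_Suc)

lemma twist_mult: "twist b (x * y) = twist b x * twist b y"
proof -
  have "x * y = (\<Sum>a\<in>supp x. \<Sum>c\<in>supp y. component x a * component y c)"
    by (subst sum_components, subst (2) sum_components) (simp add: sum_product)
  then have "twist b (x * y) = (\<Sum>a\<in>supp x. \<Sum>c\<in>supp y. sm (t (a + c) b) (component x a * component y c))"
    by (simp add: twist_sum twist_homogeneous[OF Rg_mult[OF components_in_Rg components_in_Rg]])
  also have "\<dots> = (\<Sum>a\<in>supp x. \<Sum>c\<in>supp y. sm (t a b) (component x a) * sm (t c b) (component y c))"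
    by (simp add: t_add_left scale_mult_left scale_mult_right[symmetric] mult.commute)
  also have "\<dots> = twist b x * twist b y"
    by (simp add: twist_eq_sum[OF finite_supp order_refl] sum_product)
  finally show ?thesis .
qed

lemma twist_plus: "twist (b + b') x = twist b' (twist b x)"
proof -
  have "twist b' (twist b x) = twist b' (\<Sum>a\<in>supp x. sm (t a b) (component x a))"
    by (simp only: twist_eq_sum[OF finite_supp order_refl])
  also have "\<dots> = (\<Sum>a\<in>supp x. twist b' (sm (t a b) (component x a)))"
    by (rule twist_sum)
  also have "\<dots> = (\<Sum>a\<in>supp x. sm (t a (b + b')) (component x a))"
    by (simp add: twist_scale twist_homogeneous[OF components_in_Rg] t_add_right mult.commute)
  finally show ?thesis by (simp add: twist_eq_sum[OF finite_supp order_refl])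
qed

lemma cochain_length: "cochain sm n F \<Longrightarrow> length xs \<noteq> n \<Longrightarrow> F xs = 0"
  unfolding cochain_def by blast

lemma cochain_add_arg:
  "cochain sm n F \<Longrightarrow> length xs = n \<Longrightarrow> k < n \<Longrightarrow> F (xs[k := x + y]) = F (xs[k := x]) + F (xs[k := y])"
  unfolding cochain_def by blast

lemma cochain_scale_arg:
  "cochain sm n F \<Longrightarrow> length xs = n \<Longrightarrow> k < n \<Longrightarrow> F (xs[k := sm c x]) = sm c (F (xs[k := x]))"
  unfolding cochain_def by blast

lemma cochain_zero_arg: "cochain sm n F \<Longrightarrow> length xs = n \<Longrightarrow> k < n \<Longrightarrow> F (xs[k := 0]) = 0"
  using cochain_scale_arg[of n F xs k 0 0] by simp

lemma cochain_sum_arg: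
  "cochain sm n F \<Longrightarrow> length xs = n \<Longrightarrow> k < n \<Longrightarrow> F (xs[k := sum g S]) = (\<Sum>a\<in>S. F (xs[k := g a]))"
  by (induction S rule: infinite_finite_induct) (simp_all add: cochain_zero_arg cochain_add_arg)

lemma cochain_scale_args:
  assumes F: "cochain sm n F" and len: "length xs = n"
  shows "F (map (\<lambda>j. sm (c j) (xs ! j)) [0..<n]) = sm (\<Prod>j<n. c j) (F xs)"
proof -
  define scaled where "scaled k = map (\<lambda>j. if j < k then sm (c j) (xs ! j) else xs ! j) [0..<n]" for k
  have "F (scaled k) = sm (\<Prod>j<k. c j) (F xs)" if "k \<le> n" for k
    using that
  proof (induction k)
    case 0
    then show ?case using len map_nth[of xs] by (simp add: scaled_def)
  next
    case (Suc k)
    have "scaled (Suc k) = (scaled k)[k := sm (c k) (xs ! k)]"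
      using Suc.prems by (intro nth_equalityI) (auto simp: scaled_def nth_list_update)
    moreover have "(scaled k)[k := xs ! k] = scaled k"
      using Suc.prems by (intro nth_equalityI) (auto simp: scaled_def nth_list_update)
    ultimately have "F (scaled (Suc k)) = sm (c k) (F (scaled k))"
      using cochain_scale_arg[OF F, of "scaled k" k "c k" "xs ! k"] Suc.prems
      by (simp add: scaled_def)
    then show ?case using Suc by (simp add: mult.commute)
  qed
  moreover have "scaled n = map (\<lambda>j. sm (c j) (xs ! j)) [0..<n]"
    by (simp add: scaled_def)
  ultimately show ?thesis by (metis order_refl)
qed

lemma cochain_eq_on_homogeneous:
  assumes F: "cochain sm n F" and G: "cochain sm n G"
    and homogeneous: "\<And>xs. length xs = n \<Longrightarrow> \<forall>j<n. \<exists>d. xs ! j \<in> Rg d \<Longrightarrow> F xs = G xs"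
  shows "F = G"
proof
  fix xs :: "'r list"
  show "F xs = G xs"
  proof (cases "length xs = n")
    case False
    then show ?thesis using cochain_length[OF F] cochain_length[OF G] by simp
  next
    case True
    \<comment> \<open>induction on the number of leading entries that may be inhomogeneous\<close>
    have "F ys = G ys" if "k \<le> n" "length ys = n" "\<forall>j. k \<le> j \<and> j < n \<longrightarrow> (\<exists>d. ys ! j \<in> Rg d)" for k ys
      using that
    proof (induction k arbitrary: ys)
      case 0
      then show ?case using homogeneous by auto
    next
      case (Suc k)
      let ?split = "\<lambda>a. ys[k := component (ys ! k) a]"
      have ys: "ys = ys[k := (\<Sum>a\<in>supp (ys ! k). component (ys ! k) a)]"
        using sum_components[of "ys ! k"] by simp
      have "F ys = (\<Sum>a\<in>supp (ys ! k). F (?split a))"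
        using Suc.prems by (subst ys, intro cochain_sum_arg[OF F]) auto
      also have "\<dots> = (\<Sum>a\<in>supp (ys ! k). G (?split a))"
      proof (rule sum.cong[OF refl], rule Suc.IH)
        show "\<forall>j. k \<le> j \<and> j < n \<longrightarrow> (\<exists>d. ?split a ! j \<in> Rg d)" for a
          using Suc.prems components_in_Rg by (auto simp: nth_list_update le_Suc_eq)
      qed (use Suc.prems in auto)
      also have "\<dots> = G ys"
        using Suc.prems by (subst (2) ys, intro cochain_sum_arg[OF G, symmetric]) auto
      finally show ?case .
    qed
    from this[of n xs] show ?thesis using True by fastforce
  qed
qed

text \<open>On homogeneous arguments of total degree \<open>d\<close> both sides are \<open>t d b \<cdot> g W\<close>, because \<open>g W\<close> has
  degree \<open>a' + d\<close>; multilinearity does the rest.\<close>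
lemma cochain_twist_args:
  assumes g: "cochain sm q g" and deg: "cochain_deg Rg q a' g"
  shows "g (map (twist b) W) = sm (inverse (t a' b)) (twist b (g W))"
proof -
  have "(\<lambda>W. g (map (twist b) W)) = (\<lambda>W. sm (inverse (t a' b)) (twist b (g W)))"
  proof (rule cochain_eq_on_homogeneous)
    show "cochain sm q (\<lambda>W. g (map (twist b) W))"
      unfolding cochain_def
      using cochain_length[OF g] cochain_add_arg[OF g] cochain_scale_arg[OF g]
      by (auto simp: map_update twist_add twist_scale)
    show "cochain sm q (\<lambda>W. sm (inverse (t a' b)) (twist b (g W)))"
      unfolding cochain_def
      using cochain_length[OF g] cochain_add_arg[OF g] cochain_scale_arg[OF g]
      by (auto simp: twist_add twist_scale twist_zero V.scale_right_distrib V.scale_left_commute)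
  next
    fix xs assume len: "length xs = q" and homogeneous: "\<forall>j<q. \<exists>d. xs ! j \<in> Rg d"
    define ds where "ds = map (\<lambda>x. SOME d. x \<in> Rg d) xs"
    have lds: "length ds = q" using len by (simp add: ds_def)
    have ds: "\<forall>j<q. xs ! j \<in> Rg (ds ! j)"
      using homogeneous len unfolding ds_def by (auto intro: someI_ex)
    have "map (twist b) xs = map (\<lambda>j. sm (t (ds ! j) b) (xs ! j)) [0..<q]"
      using len ds by (intro nth_equalityI) (auto simp: twist_homogeneous)
    then have "g (map (twist b) xs) = sm (t (sum_list ds) b) (g xs)"
      using cochain_scale_args[OF g len] by (simp add: t_sum_list lds)
    moreover have "g xs \<in> Rg (a' + sum_list ds)"
      using deg len lds ds unfolding cochain_deg_def by blast
    ultimately show "g (map (twist b) xs) = sm (inverse (t a' b)) (twist b (g xs))"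
      by (simp add: twist_homogeneous t_add_left t_nonzero)
  qed
  then show ?thesis by metis
qed

end

section \<open>Faces and insertions of argument lists\<close>

definition inner_face :: "nat \<Rightarrow> 'r::times list \<Rightarrow> 'r list" where
  "inner_face k xs = take (k - 1) xs @ [xs ! (k - 1) * xs ! k] @ drop (k + 1) xs"

lemma length_inner_face: "1 \<le> k \<Longrightarrow> k < length X \<Longrightarrow> length (inner_face k X) = length X - 1"
  by (simp add: inner_face_def)

lemma nth_inner_face:
  "1 \<le> k \<Longrightarrow> k < length X \<Longrightarrow> j < length X - 1 \<Longrightarrow>
   inner_face k X ! j =
     (if j < k - 1 then X ! j else if j = k - 1 then X ! (k - 1) * X ! k else X ! (j + 1))"
  by (auto simp: inner_face_def nth_append)

lemma inner_face_append_left: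
  "1 \<le> k \<Longrightarrow> k < length A \<Longrightarrow> inner_face k (A @ B) = inner_face k A @ B"
  by (intro nth_equalityI) (auto simp: length_inner_face nth_inner_face nth_append)

lemma inner_face_append_right:
  assumes "length A < k" "k < length A + length B"
  shows "inner_face k (A @ B) = A @ inner_face (k - length A) B"
proof -
  obtain l where "k = length A + Suc l" using assms(1) by (metis less_iff_Suc_add add_Suc_right)
  then show ?thesis by (simp add: inner_face_def nth_append)
qed

lemma take_inner_face:
  "1 \<le> k \<Longrightarrow> k < n \<Longrightarrow> n \<le> length X \<Longrightarrow> take (n - 1) (inner_face k X) = inner_face k (take n X)"
  by (intro nth_equalityI) (auto simp: length_inner_face nth_inner_face)

lemma drop_inner_face:
  "1 \<le> k \<Longrightarrow> k < n \<Longrightarrow> n \<le> length X \<Longrightarrow> drop (n - 1) (inner_face k X) = drop n X"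
  by (intro nth_equalityI) (auto simp: length_inner_face nth_inner_face)

lemma drop_inner_face_shift:
  "i < k \<Longrightarrow> k < length X \<Longrightarrow> drop i (inner_face k X) = inner_face (k - i) (drop i X)"
  by (intro nth_equalityI) (auto simp: length_inner_face nth_inner_face)

lemma take_inner_face_below:
  "i < k \<Longrightarrow> k < length X \<Longrightarrow> take i (inner_face k X) = take i X"
  by (simp add: inner_face_def min_def le_diff_conv2)

lemma inner_face_map:
  "1 \<le> k \<Longrightarrow> k < length X \<Longrightarrow> (\<And>x y. f (x * y) = f x * f y) \<Longrightarrow>
   inner_face k (map f X) = map f (inner_face k X)"
  by (intro nth_equalityI) (auto simp: length_inner_face nth_inner_face)

definition hoch_summand :: "('r::ring_1 \<Rightarrow> 'r) \<Rightarrow> nat \<Rightarrow> ('r list \<Rightarrow> 'r) \<Rightarrow> 'r list \<Rightarrow> nat \<Rightarrow> 'r" where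
  "hoch_summand \<rho> m \<phi> xs k =
     (if k = 0 then xs ! 0 * \<phi> (drop 1 xs)
      else if k = Suc m then (-1) ^ Suc m * (\<phi> (take m xs) * \<rho> (xs ! m))
      else (-1) ^ k * \<phi> (inner_face k xs))"

lemma hoch_diff_eq_sum_summands:
  assumes "length xs = Suc m"
  shows "hoch_diff \<rho> m \<phi> xs = (\<Sum>k\<le>Suc m. hoch_summand \<rho> m \<phi> xs k)"
proof -
  have "{..Suc m} = insert 0 (insert (Suc m) {1..m})" by auto
  then have "(\<Sum>k\<le>Suc m. hoch_summand \<rho> m \<phi> xs k) =
      hoch_summand \<rho> m \<phi> xs 0 + (hoch_summand \<rho> m \<phi> xs (Suc m) + (\<Sum>k\<in>{1..m}. hoch_summand \<rho> m \<phi> xs k))"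
    by simp
  also have "(\<Sum>k\<in>{1..m}. hoch_summand \<rho> m \<phi> xs k) =
      (\<Sum>i\<in>{1..m}. (-1) ^ i * \<phi> (take (i - 1) xs @ [xs ! (i - 1) * xs ! i] @ drop (i + 1) xs))"
    by (rule sum.cong) (auto simp: hoch_summand_def inner_face_def)
  finally show ?thesis using assms by (simp add: hoch_diff_def hoch_summand_def algebra_simps)
qed

locale cochain_insertion =
  fixes h :: "'r::ring_1 list \<Rightarrow> 'r" and \<sigma> :: "'r \<Rightarrow> 'r" and p :: nat
begin

text \<open>\<open>g (insertion i X)\<close> is the twisted Gerstenhaber insertion \<open>(g \<circ>\<^sub>i h)(X)\<close>: the entries following
  the block read by \<open>h\<close> are moved past \<open>h\<close> and therefore twisted by \<open>\<sigma>\<close>.\<close>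
definition insertion :: "nat \<Rightarrow> 'r list \<Rightarrow> 'r list" where
  "insertion i X = take i X @ [h (take p (drop i X))] @ map \<sigma> (drop (i + p) X)"

definition block :: "nat \<Rightarrow> 'r list \<Rightarrow> 'r list" where
  "block i X = take (p + 1) (drop i X)"

definition replace_block :: "nat \<Rightarrow> 'r list \<Rightarrow> 'r \<Rightarrow> 'r list" where
  "replace_block i X y = take i X @ [y] @ map \<sigma> (drop (i + p + 1) X)"

lemma length_insertion: "i + p \<le> length X \<Longrightarrow> length (insertion i X) = length X - p + 1"
  by (simp add: insertion_def)

lemma length_replace_block: "i + p < length X \<Longrightarrow> length (replace_block i X y) = length X - p"
  by (simp add: replace_block_def)

lemma replace_block_update: "i < length X \<Longrightarrow> (replace_block i X z)[i := y] = replace_block i X y"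
  by (simp add: replace_block_def list_update_append)

lemma nth0_insertion_Suc: "Suc i + p \<le> length X \<Longrightarrow> insertion (Suc i) X ! 0 = X ! 0"
  by (simp add: insertion_def nth_append)

lemma drop1_insertion_Suc: "Suc i + p \<le> length X \<Longrightarrow> drop 1 (insertion (Suc i) X) = insertion i (drop 1 X)"
  by (simp add: insertion_def drop_Cons' take_Suc drop_take)

lemma insertion_0: "insertion 0 X ! 0 = h (take p X)" "drop 1 (insertion 0 X) = map \<sigma> (drop p X)"
  by (auto simp: insertion_def)

lemma insertion_last:
  "length X = p + q \<Longrightarrow> take q (insertion q X) = take q X"
  "length X = p + q \<Longrightarrow> insertion q X ! q = h (drop q X)"
  by (auto simp: insertion_def nth_append)

lemma take_insertion:
  assumes "i < q" "length X = p + q"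
  shows "take q (insertion i X) = insertion i (take (p + q - 1) X)"
proof -
  have "take (q - Suc i) (drop (i + p) X) = drop (i + p) (take (p + q - 1) X)"
    using assms by (simp add: drop_take add.commute)
  moreover have "q - i = Suc (q - Suc i)" using assms by simp
  ultimately show ?thesis using assms by (simp add: insertion_def take_map drop_take)
qed

lemma nth_insertion_last: "i < q \<Longrightarrow> length X = p + q \<Longrightarrow> insertion i X ! q = \<sigma> (X ! (p + q - 1))"
  by (simp add: insertion_def nth_append)

lemma inner_face_insertion_before:
  assumes "1 \<le> k" "k \<le> i" "Suc i + p \<le> length X"
  shows "inner_face k (insertion (Suc i) X) = insertion i (inner_face k X)"
proof -
  have "take i (inner_face k X) = inner_face k (take (Suc i) X)"
    using take_inner_face[of k "Suc i" X] assms by simp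
  moreover have "drop i (inner_face k X) = drop (Suc i) X"
    using drop_inner_face[of k "Suc i" X] assms by simp
  moreover have "drop (i + p) (inner_face k X) = drop (Suc i + p) X"
    using drop_inner_face[of k "Suc i + p" X] assms by simp
  moreover have "inner_face k (insertion (Suc i) X) =
      inner_face k (take (Suc i) X) @ [h (take p (drop (Suc i) X))] @ map \<sigma> (drop (Suc i + p) X)"
    unfolding insertion_def using assms by (subst inner_face_append_left) auto
  ultimately show ?thesis by (simp add: insertion_def)
qed

lemma inner_face_insertion_after:
  assumes "i + p + 1 \<le> k" "k < length X" and \<sigma>_mult: "\<And>x y. \<sigma> (x * y) = \<sigma> x * \<sigma> y"
  shows "inner_face (k + 1 - p) (insertion i X) = insertion i (inner_face k X)"
proof -
  let ?head = "take i X @ [h (take p (drop i X))]"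
  have "inner_face (k + 1 - p) (?head @ map \<sigma> (drop (i + p) X)) =
      ?head @ inner_face (k - i - p) (map \<sigma> (drop (i + p) X))"
    using assms by (subst inner_face_append_right) (auto simp: Suc_diff_le add.commute[of p i])
  also have "\<dots> = ?head @ map \<sigma> (inner_face (k - i - p) (drop (i + p) X))"
    using assms by (subst inner_face_map) auto
  also have "\<dots> = insertion i (inner_face k X)"
    using assms drop_inner_face_shift[of "i + p" k X] take_inner_face_below[of i k X]
      drop_inner_face_shift[of i k X] take_inner_face_below[of p "k - i" "drop i X"]
    by (simp add: insertion_def add.commute[of p i])
  finally show ?thesis by (simp add: insertion_def add.commute[of p i])
qed

lemma insertion_inner_face_inside:
  assumes "i + 1 \<le> k" "k \<le> i + p" "length X = p + q" "i < q"
  shows "insertion i (inner_face k X) = replace_block i X (h (inner_face (k - i) (block i X)))"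
proof -
  have "take i (inner_face k X) = take i X"
    using take_inner_face_below[of i k X] assms by simp
  moreover have "take p (drop i (inner_face k X)) = inner_face (k - i) (block i X)"
    using drop_inner_face_shift[of i k X] take_inner_face[of "k - i" "p + 1" "drop i X"] assms
    by (simp add: block_def)
  moreover have "drop (i + p) (inner_face k X) = drop (i + p + 1) X"
    using drop_inner_face[of k "i + p + 1" X] assms by simp
  ultimately show ?thesis by (simp add: insertion_def replace_block_def)
qed

lemma inner_face_insertion_left_end:
  assumes "1 \<le> j" "j \<le> q" "length X = p + q"
  shows "inner_face j (insertion j X) = replace_block (j - 1) X (X ! (j - 1) * h (drop 1 (block (j - 1) X)))"
proof -
  have "drop 1 (block (j - 1) X) = take p (drop j X)" using assms by (simp add: block_def drop_take)
  then show ?thesis using assms by (simp add: insertion_def replace_block_def inner_face_def nth_append)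
qed

lemma inner_face_insertion_right_end:
  "j < q \<Longrightarrow> length X = p + q \<Longrightarrow>
   inner_face (j + 1) (insertion j X) = replace_block j X (h (take p (block j X)) * \<sigma> (block j X ! p))"
  by (simp add: insertion_def replace_block_def block_def inner_face_def nth_append add.commute
      drop_map[symmetric])

lemma insertion_update_before:
  "k < i \<Longrightarrow> i + p \<le> length W \<Longrightarrow> insertion i (W[k := x]) = (insertion i W)[k := x]"
  by (simp add: insertion_def list_update_append take_update_swap)

lemma insertion_update_inside:
  "i \<le> k \<Longrightarrow> k < i + p \<Longrightarrow> i + p \<le> length W \<Longrightarrow>
   insertion i (W[k := x]) = (insertion i W)[i := h ((take p (drop i W))[k - i := x])]"
  by (simp add: insertion_def list_update_append drop_update_swap take_update_swap list_update_beyond)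

lemma insertion_update_after:
  assumes "i + p \<le> k" "k < length W"
  shows "insertion i (W[k := x]) = (insertion i W)[k + 1 - p := \<sigma> x]"
proof -
  let ?head = "take i W @ [h (take p (drop i W))]"
  have "(?head @ map \<sigma> (drop (i + p) W))[k + 1 - p := \<sigma> x] =
      ?head @ (map \<sigma> (drop (i + p) W))[k - (i + p) := \<sigma> x]"
    using assms by (subst list_update_append) (auto simp: Suc_diff_le add.commute[of p i])
  then show ?thesis
    using assms by (simp add: insertion_def drop_update_swap map_update)
qed

end

section \<open>The coboundary of the Gerstenhaber homotopy\<close>

lemma neg_one_power_commute: "(-1) ^ k * x = x * (-1) ^ k" for x :: "'r::ring_1"
  by (cases "even k") simp_all

lemma neg_one_power_left_commute: "(-1) ^ a * ((-1) ^ b * x) = (-1) ^ b * ((-1) ^ a * x)"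
  for x :: "'r::ring_1"
  by (simp only: mult.assoc[symmetric] power_add[symmetric] add.commute)

lemma neg_one_power_cancel: "(-1) ^ k * ((-1) ^ k * x) = x" for x :: "'r::ring_1"
  by (cases "even k") simp_all

lemma neg_one_power_square: "(-1) ^ k * (-1) ^ k = (1::'r::ring_1)"
  by (cases "even k") simp_all

lemma neg_one_power_parity: "even (a + b) \<Longrightarrow> (-1::'r::ring_1) ^ a = (-1) ^ b"
  by (auto simp: minus_one_power_iff)

definition gerstenhaber_homotopy ::
  "('r::ring_1 list \<Rightarrow> 'r) \<Rightarrow> ('r list \<Rightarrow> 'r) \<Rightarrow> ('r \<Rightarrow> 'r) \<Rightarrow> nat \<Rightarrow> nat \<Rightarrow> 'r list \<Rightarrow> 'r" where
  "gerstenhaber_homotopy g h \<sigma> p q W =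
     (if length W = p + q - 1
      then (\<Sum>i<q. (-1) ^ (i * (p + 1)) * g (cochain_insertion.insertion h \<sigma> p i W))
      else 0)"

text \<open>Each summand of
  \<open>\<delta>(g \<circ>\<^sub>i h)(X)\<close> is, up to sign, a summand of \<open>\<delta>g\<close> at an insertion (\<open>g_face\<close>) or \<open>g\<close> applied to a
  summand of \<open>\<delta>h\<close> on a block of \<open>X\<close> (\<open>h_face\<close>).\<close>
locale homotopy_expansion = cochain_insertion h \<sigma> p
  for h :: "'r::ring_1 list \<Rightarrow> 'r" and \<sigma> p +
  fixes g :: "'r list \<Rightarrow> 'r" and \<tau> :: "'r \<Rightarrow> 'r" and q :: nat and X :: "'r list"
  assumes g_add: "length W = q \<Longrightarrow> i < q \<Longrightarrow> g (W[i := x + y]) = g (W[i := x]) + g (W[i := y])"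
    and g_zero: "length W = q \<Longrightarrow> i < q \<Longrightarrow> g (W[i := 0]) = 0"
    and \<sigma>_mult: "\<sigma> (x * y) = \<sigma> x * \<sigma> y"
    and g_cocycle: "length Y = Suc q \<Longrightarrow> hoch_diff \<tau> q g Y = 0"
    and h_cocycle: "length V = Suc p \<Longrightarrow> hoch_diff \<sigma> p h V = 0"
    and q_pos: "1 \<le> q"
    and length_X: "length X = p + q"
begin

definition homotopy_face :: "nat \<Rightarrow> nat \<Rightarrow> 'r" where
  "homotopy_face i k = hoch_summand (\<tau> \<circ> \<sigma>) (p + q - 1) (\<lambda>W. g (insertion i W)) X k"

definition g_face :: "nat \<Rightarrow> nat \<Rightarrow> 'r" where
  "g_face j k = hoch_summand \<tau> q g (insertion j X) k"

definition h_face :: "nat \<Rightarrow> nat \<Rightarrow> 'r" where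
  "h_face i l = g (replace_block i X (hoch_summand \<sigma> p h (block i X) l))"

definition g_faces_below :: "nat \<Rightarrow> 'r" where
  "g_faces_below j = (\<Sum>k<j. g_face j k)"

definition g_faces_above :: "nat \<Rightarrow> 'r" where
  "g_faces_above j = (\<Sum>k\<in>{j + 2..Suc q}. g_face j k)"

definition sign :: "nat \<Rightarrow> 'r" where
  "sign i = (-1) ^ (i * (p + 1))"

definition outer_h_faces :: "nat \<Rightarrow> 'r" where
  "outer_h_faces i = sign i * ((-1) ^ i * (h_face i 0 + h_face i (Suc p)))"

lemma g_sum: "length W = q \<Longrightarrow> i < q \<Longrightarrow> g (W[i := sum f S]) = (\<Sum>l\<in>S. g (W[i := f l]))"
  by (induction S rule: infinite_finite_induct) (simp_all add: g_zero g_add)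

lemma g_sign: "length W = q \<Longrightarrow> i < q \<Longrightarrow> g (W[i := (-1) ^ l * x]) = (-1) ^ l * g (W[i := x])"
  using g_add[of W i x "- x"] g_zero[of W i]
  by (cases "even l") (simp_all add: eq_neg_iff_add_eq_0 add.commute)

lemma length_replace_block_X: "i < q \<Longrightarrow> length (replace_block i X y) = q"
  using length_replace_block[of i X y] length_X by simp

lemma g_replace_block_sign:
  "i < q \<Longrightarrow> g (replace_block i X ((-1) ^ l * y)) = (-1) ^ l * g (replace_block i X y)"
  using g_sign[of "replace_block i X 0" i l y] length_X
  by (simp add: length_replace_block_X replace_block_update)

lemma sum_g_faces: "j \<le> q \<Longrightarrow> (\<Sum>k\<le>Suc q. g_face j k) = 0"
  using g_cocycle[of "insertion j X"] hoch_diff_eq_sum_summands[of "insertion j X" q \<tau> g]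
    length_insertion[of j X] length_X
  by (simp add: g_face_def)

lemma sum_h_faces: "i < q \<Longrightarrow> (\<Sum>l\<le>Suc p. h_face i l) = 0"
proof -
  assume i: "i < q"
  have block: "length (block i X) = Suc p" using i length_X by (simp add: block_def)
  have "(\<Sum>l\<le>Suc p. h_face i l) =
      g ((replace_block i X 0)[i := (\<Sum>l\<le>Suc p. hoch_summand \<sigma> p h (block i X) l)])"
    unfolding h_face_def using i length_X
    by (subst g_sum) (simp_all add: length_replace_block_X replace_block_update)
  also have "\<dots> = g ((replace_block i X 0)[i := 0])"
    using hoch_diff_eq_sum_summands[OF block, of \<sigma> h] h_cocycle[OF block] by simp
  also have "\<dots> = 0"
    using i g_zero[of "replace_block i X 0" i] by (simp add: length_replace_block_X)
  finally show ?thesis .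
qed

lemma homotopy_face_below: "i < q \<Longrightarrow> k \<le> i \<Longrightarrow> homotopy_face i k = g_face (Suc i) k"
  using length_X q_pos drop1_insertion_Suc[of i X]
  by (auto simp: homotopy_face_def g_face_def hoch_summand_def nth0_insertion_Suc
      inner_face_insertion_before)

lemma homotopy_face_inside:
  assumes "i < q" "i + 1 \<le> k" "k \<le> i + p"
  shows "homotopy_face i k = (-1) ^ i * h_face i (k - i)"
proof -
  let ?face = "g (replace_block i X (h (inner_face (k - i) (block i X))))"
  have "homotopy_face i k = (-1) ^ k * ?face"
    using assms q_pos length_X by (simp add: homotopy_face_def hoch_summand_def insertion_inner_face_inside)
  moreover have "k - i \<noteq> 0" "k - i \<noteq> Suc p" using assms by auto
  then have "hoch_summand \<sigma> p h (block i X) (k - i) = (-1) ^ (k - i) * h (inner_face (k - i) (block i X))"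
    by (simp add: hoch_summand_def)
  then have "h_face i (k - i) = (-1) ^ (k - i) * ?face"
    by (simp only: h_face_def g_replace_block_sign[OF assms(1)])
  moreover have "(-1::'r) ^ k = (-1) ^ i * (-1) ^ (k - i)"
    using assms by (simp add: power_add[symmetric])
  ultimately show ?thesis by (simp add: mult.assoc)
qed

lemma homotopy_face_above:
  assumes "i < q" "i + p + 1 \<le> k" "k \<le> p + q"
  shows "homotopy_face i k = (-1) ^ (p + 1) * g_face i (k + 1 - p)"
proof (cases "k = p + q")
  case True
  let ?face = "g (insertion i (take (p + q - 1) X)) * \<tau> (\<sigma> (X ! (p + q - 1)))"
  have "homotopy_face i k = (-1) ^ (p + q) * ?face"
    using assms True q_pos by (simp add: homotopy_face_def hoch_summand_def)
  moreover have "g_face i (k + 1 - p) = (-1) ^ Suc q * ?face"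
    using assms True length_X by (simp add: g_face_def hoch_summand_def take_insertion nth_insertion_last)
  moreover have "(-1::'r) ^ (p + q) = (-1) ^ (p + 1) * (-1) ^ Suc q"
    unfolding power_add[symmetric] by (rule neg_one_power_parity) simp
  ultimately show ?thesis by (simp add: mult.assoc)
next
  case False
  have "inner_face (k + 1 - p) (insertion i X) = insertion i (inner_face k X)"
    using inner_face_insertion_after[of i k X] assms False length_X \<sigma>_mult by simp
  moreover have "k + 1 - p \<noteq> 0" "k + 1 - p \<noteq> Suc q" using assms False by auto
  ultimately have "g_face i (k + 1 - p) = (-1) ^ (k + 1 - p) * g (insertion i (inner_face k X))"
    by (simp add: g_face_def hoch_summand_def)
  moreover have "homotopy_face i k = (-1) ^ k * g (insertion i (inner_face k X))"
    using assms False q_pos by (simp add: homotopy_face_def hoch_summand_def)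
  moreover have "(-1::'r) ^ k = (-1) ^ (p + 1) * (-1) ^ (k + 1 - p)"
    unfolding power_add[symmetric] by (rule neg_one_power_parity) (use assms in auto)
  ultimately show ?thesis by (simp add: mult.assoc)
qed

lemma g_face_diagonal: "1 \<le> j \<Longrightarrow> j \<le> q \<Longrightarrow> g_face j j = (-1) ^ j * h_face (j - 1) 0"
  using length_X inner_face_insertion_left_end[of j q X]
  by (simp add: g_face_def h_face_def hoch_summand_def block_def)

lemma g_face_superdiagonal:
  assumes "j < q"
  shows "g_face j (Suc j) = (-1) ^ Suc j * ((-1) ^ (p + 1) * h_face j (Suc p))"
proof -
  let ?face = "g (replace_block j X (h (take p (block j X)) * \<sigma> (block j X ! p)))"
  have "g_face j (Suc j) = (-1) ^ Suc j * ?face"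
    using assms length_X inner_face_insertion_right_end[of j q X] by (simp add: g_face_def hoch_summand_def)
  moreover have "h_face j (Suc p) = (-1) ^ (p + 1) * ?face"
    unfolding h_face_def hoch_summand_def
    by (simp only: g_replace_block_sign[OF assms, symmetric]) simp
  ultimately show ?thesis by (simp only: neg_one_power_cancel)
qed

lemma g_face_first: "g_face 0 0 = h (take p X) * g (map \<sigma> (drop p X))"
  using insertion_0[of X] by (simp add: g_face_def hoch_summand_def)

lemma g_face_last: "g_face q (Suc q) = (-1) ^ Suc q * (g (take q X) * \<tau> (h (drop q X)))"
  using length_X by (simp add: g_face_def hoch_summand_def insertion_last)

lemma g_faces_split: "j \<le> q \<Longrightarrow> g_faces_below j + g_faces_above j = - (g_face j j + g_face j (Suc j))"
proof -
  assume j: "j \<le> q"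
  have split: "{..Suc q} = {..<j} \<union> {j, Suc j} \<union> {j + 2..Suc q}" using j by auto
  have "(\<Sum>k\<le>Suc q. g_face j k) = g_faces_below j + (g_face j j + g_face j (Suc j)) + g_faces_above j"
    unfolding split g_faces_below_def g_faces_above_def by (subst sum.union_disjoint, auto)+
  then show ?thesis using sum_g_faces[OF j] by (simp add: algebra_simps eq_neg_iff_add_eq_0)
qed

lemma sum_homotopy_faces:
  assumes i: "i < q"
  shows "(\<Sum>k\<le>p + q. homotopy_face i k) =
    g_faces_below (Suc i) + (-1) ^ (p + 1) * g_faces_above i - (-1) ^ i * (h_face i 0 + h_face i (Suc p))"
proof -
  have split: "{..p + q} = {..i} \<union> {i + 1..i + p} \<union> {i + p + 1..p + q}" using i by auto
  have "(\<Sum>k\<le>p + q. homotopy_face i k) = (\<Sum>k\<le>i. homotopy_face i k) +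
      (\<Sum>k\<in>{i + 1..i + p}. homotopy_face i k) + (\<Sum>k\<in>{i + p + 1..p + q}. homotopy_face i k)"
    unfolding split by (subst sum.union_disjoint, auto)+
  moreover have "(\<Sum>k\<le>i. homotopy_face i k) = g_faces_below (Suc i)"
    unfolding g_faces_below_def using i by (simp add: homotopy_face_below lessThan_Suc_atMost)
  moreover have "(\<Sum>k\<in>{i + 1..i + p}. homotopy_face i k) = - ((-1) ^ i * (h_face i 0 + h_face i (Suc p)))"
  proof -
    have "{..Suc p} = {0, Suc p} \<union> {1..p}" by auto
    then have "(\<Sum>l\<in>{1..p}. h_face i l) = - (h_face i 0 + h_face i (Suc p))"
      using sum_h_faces[OF i] by (simp add: algebra_simps eq_neg_iff_add_eq_0)
    moreover have "(\<Sum>k\<in>{i + 1..i + p}. homotopy_face i k) = (-1) ^ i * (\<Sum>k\<in>{1 + i..p + i}. h_face i (k - i))"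
      using i by (simp add: homotopy_face_inside sum_distrib_left add.commute)
    ultimately show ?thesis
      by (simp only: sum.shift_bounds_cl_nat_ivl add_diff_cancel_right' mult_minus_right)
  qed
  moreover have "(\<Sum>k\<in>{i + p + 1..p + q}. homotopy_face i k) = (-1) ^ (p + 1) * g_faces_above i"
  proof -
    have "(\<Sum>k\<in>{i + p + 1..p + q}. g_face i (k + 1 - p)) = g_faces_above i"
      unfolding g_faces_above_def
      by (rule sum.reindex_bij_witness[where i = "\<lambda>k. k + p - 1" and j = "\<lambda>k. k + 1 - p"]) auto
    moreover have "(\<Sum>k\<in>{i + p + 1..p + q}. homotopy_face i k) =
        (\<Sum>k\<in>{i + p + 1..p + q}. (-1) ^ (p + 1) * g_face i (k + 1 - p))"
      using i by (intro sum.cong) (auto simp: homotopy_face_above)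
    ultimately show ?thesis by (simp only: sum_distrib_left[symmetric])
  qed
  ultimately show ?thesis by (simp only: diff_conv_add_uminus add_ac)
qed

lemma sign_Suc: "sign i * (-1) ^ (p + 1) = sign (Suc i)"
  unfolding sign_def power_add[symmetric] by (rule arg_cong[where f = "power (-1)"]) simp

lemma sign_Suc_Suc: "sign (Suc (Suc i)) = sign i"
  by (simp only: sign_Suc[symmetric] mult.assoc neg_one_power_square mult_1_right)

lemma signed_sum_homotopy_faces:
  "(\<Sum>i<q. sign i * (\<Sum>k\<le>p + q. homotopy_face i k)) =
   (\<Sum>j\<le>q. sign (Suc j) * (g_faces_below j + g_faces_above j)) - (\<Sum>i<q. outer_h_faces i)"
proof -
  have "sign i * (\<Sum>k\<le>p + q. homotopy_face i k) =
      sign (Suc (Suc i)) * g_faces_below (Suc i) + sign (Suc i) * g_faces_above i - outer_h_faces i"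
    if "i < q" for i
    by (simp only: sum_homotopy_faces[OF that] outer_h_faces_def distrib_left right_diff_distrib
        mult.assoc[symmetric] sign_Suc sign_Suc_Suc)
  then have "(\<Sum>i<q. sign i * (\<Sum>k\<le>p + q. homotopy_face i k)) =
      (\<Sum>i<q. sign (Suc (Suc i)) * g_faces_below (Suc i)) + (\<Sum>i<q. sign (Suc i) * g_faces_above i)
      - (\<Sum>i<q. outer_h_faces i)"
    by (simp add: sum.distrib sum_subtractf)
  moreover have "(\<Sum>i<q. sign (Suc (Suc i)) * g_faces_below (Suc i)) = (\<Sum>j\<le>q. sign (Suc j) * g_faces_below j)"
    by (simp add: lessThan_Suc_atMost[symmetric] sum.lessThan_Suc_shift g_faces_below_def
        del: sum.lessThan_Suc)
  moreover have "(\<Sum>i<q. sign (Suc i) * g_faces_above i) = (\<Sum>j\<le>q. sign (Suc j) * g_faces_above j)"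
    by (simp add: lessThan_Suc_atMost[symmetric] g_faces_above_def)
  ultimately show ?thesis by (simp add: sum.distrib distrib_left)
qed

lemma signed_sum_g_face_diagonals:
  "(\<Sum>j\<le>q. sign (Suc j) * (g_face j j + g_face j (Suc j))) =
   sign 1 * (h (take p X) * g (map \<sigma> (drop p X)))
   + sign (Suc q) * ((-1) ^ Suc q * (g (take q X) * \<tau> (h (drop q X))))
   - (\<Sum>i<q. outer_h_faces i)"
proof -
  define L where "L = h (take p X) * g (map \<sigma> (drop p X))"
  define M where "M = g (take q X) * \<tau> (h (drop q X))"
  define B0 where "B0 = (\<Sum>i<q. sign i * ((-1) ^ Suc i * h_face i 0))"
  define Bp where "Bp = (\<Sum>i<q. sign i * ((-1) ^ Suc i * h_face i (Suc p)))"
  have diagonal: "(\<Sum>j\<le>q. sign (Suc j) * g_face j j) = sign 1 * L + B0"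
    by (simp add: L_def B0_def lessThan_Suc_atMost[symmetric] sum.lessThan_Suc_shift g_face_first
        g_face_diagonal sign_Suc_Suc del: sum.lessThan_Suc)
  have "sign (Suc j) * g_face j (Suc j) = sign j * ((-1) ^ Suc j * h_face j (Suc p))" if "j < q" for j
    by (simp only: g_face_superdiagonal[OF that] sign_Suc[symmetric] mult.assoc
        neg_one_power_left_commute[of "Suc j" "p + 1"] neg_one_power_cancel)
  then have superdiagonal: "(\<Sum>j\<le>q. sign (Suc j) * g_face j (Suc j)) = Bp + sign (Suc q) * ((-1) ^ Suc q * M)"
    by (simp add: Bp_def M_def lessThan_Suc_atMost[symmetric] g_face_last)
  have outer: "B0 + Bp = - (\<Sum>i<q. outer_h_faces i)"
    by (simp add: B0_def Bp_def outer_h_faces_def sum.distrib[symmetric] sum_negf[symmetric] algebra_simps)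
  have "(\<Sum>j\<le>q. sign (Suc j) * (g_face j j + g_face j (Suc j))) =
      (\<Sum>j\<le>q. sign (Suc j) * g_face j j) + (\<Sum>j\<le>q. sign (Suc j) * g_face j (Suc j))"
    by (simp only: distrib_left sum.distrib)
  also have "\<dots> = sign 1 * L + sign (Suc q) * ((-1) ^ Suc q * M) + (B0 + Bp)"
    by (simp only: diagonal superdiagonal add_ac)
  finally show ?thesis by (simp only: outer L_def M_def diff_conv_add_uminus)
qed

lemma signed_sum_homotopy_faces_eq:
  "(\<Sum>i<q. sign i * (\<Sum>k\<le>p + q. homotopy_face i k)) =
   - (sign 1 * (h (take p X) * g (map \<sigma> (drop p X))))
   - sign (Suc q) * ((-1) ^ Suc q * (g (take q X) * \<tau> (h (drop q X))))"
proof -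
  have "(\<Sum>j\<le>q. sign (Suc j) * (g_faces_below j + g_faces_above j)) =
      - (\<Sum>j\<le>q. sign (Suc j) * (g_face j j + g_face j (Suc j)))"
    by (subst sum_negf[symmetric], rule sum.cong) (simp_all only: g_faces_split mult_minus_right atMost_iff)
  then show ?thesis
    unfolding signed_sum_homotopy_faces signed_sum_g_face_diagonals by (simp add: algebra_simps)
qed

lemma sign_commute: "x * (sign i * y) = sign i * (x * y)"
proof -
  have "x * (sign i * y) = (x * sign i) * y" by (simp only: mult.assoc)
  also have "\<dots> = (sign i * x) * y" by (simp only: sign_def neg_one_power_commute)
  finally show ?thesis by (simp only: mult.assoc)
qed

lemma gerstenhaber_homotopy_eq:
  "length W = p + q - 1 \<Longrightarrow> gerstenhaber_homotopy g h \<sigma> p q W = (\<Sum>i<q. sign i * g (insertion i W))"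
  by (simp add: gerstenhaber_homotopy_def sign_def)

lemma hoch_summand_gerstenhaber_homotopy:
  assumes "k \<le> p + q"
  shows "hoch_summand (\<tau> \<circ> \<sigma>) (p + q - 1) (gerstenhaber_homotopy g h \<sigma> p q) X k =
    (\<Sum>i<q. sign i * homotopy_face i k)"
proof -
  have length: "length X = Suc (p + q - 1)" using length_X q_pos by simp
  consider "k = 0" | "k = p + q" | "0 < k" "k < p + q" using assms by linarith
  then show ?thesis
  proof cases
    case 1
    then show ?thesis using length
      by (simp add: hoch_summand_def homotopy_face_def gerstenhaber_homotopy_eq
          sum_distrib_left sign_commute)
  next
    case 2
    then show ?thesis using length q_pos
      by (simp add: hoch_summand_def homotopy_face_def gerstenhaber_homotopy_eq
          sum_distrib_left sum_distrib_right mult.assoc sign_commute del: power_Suc)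
  next
    case 3
    then show ?thesis using length
      by (simp add: hoch_summand_def homotopy_face_def gerstenhaber_homotopy_eq
          sum_distrib_left sign_commute length_inner_face)
  qed
qed

theorem hoch_diff_gerstenhaber_homotopy:
  "hoch_diff (\<tau> \<circ> \<sigma>) (p + q - 1) (gerstenhaber_homotopy g h \<sigma> p q) X =
   (-1) ^ p * (h (take p X) * g (map \<sigma> (drop p X)))
   - (-1) ^ (p * Suc q) * (g (take q X) * \<tau> (h (drop q X)))"
proof -
  have length: "length X = Suc (p + q - 1)" and degree: "Suc (p + q - 1) = p + q"
    using length_X q_pos by simp_all
  have "hoch_diff (\<tau> \<circ> \<sigma>) (p + q - 1) (gerstenhaber_homotopy g h \<sigma> p q) X =
      (\<Sum>k\<le>p + q. hoch_summand (\<tau> \<circ> \<sigma>) (p + q - 1) (gerstenhaber_homotopy g h \<sigma> p q) X k)"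
    by (simp only: hoch_diff_eq_sum_summands[OF length] degree)
  also have "\<dots> = (\<Sum>k\<le>p + q. \<Sum>i<q. sign i * homotopy_face i k)"
    by (rule sum.cong[OF refl], rule hoch_summand_gerstenhaber_homotopy) simp
  also have "\<dots> = (\<Sum>i<q. sign i * (\<Sum>k\<le>p + q. homotopy_face i k))"
    by (subst sum.swap) (simp add: sum_distrib_left)
  also have "\<dots> = - (sign 1 * (h (take p X) * g (map \<sigma> (drop p X))))
      - (sign (Suc q) * (-1) ^ Suc q) * (g (take q X) * \<tau> (h (drop q X)))"
    by (simp only: signed_sum_homotopy_faces_eq mult.assoc)
  also have "sign (Suc q) * (-1) ^ Suc q = (-1) ^ (p * Suc q)"
  proof -
    have exponent: "Suc q * (p + 1) + Suc q = p * Suc q + 2 * Suc q" by simp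
    show ?thesis
      unfolding sign_def power_add[symmetric] by (simp only: exponent power_add power_mult) simp
  qed
  also have "- (sign 1 * (h (take p X) * g (map \<sigma> (drop p X)))) = (-1) ^ p * (h (take p X) * g (map \<sigma> (drop p X)))"
    by (simp add: sign_def)
  finally show ?thesis .
qed

end

section \<open>The homotopy as a Hochschild cochain\<close>

lemma hoch_diff_add: "hoch_diff \<rho> N (\<lambda>W. F W + G W) xs = hoch_diff \<rho> N F xs + hoch_diff \<rho> N G xs"
  by (simp add: hoch_diff_def sum.distrib algebra_simps)

context twisted_graded_algebra
begin

lemma scale_neg_one_power: "sm ((-1) ^ n) x = (-1) ^ n * x"
  by (cases "even n") simp_all

lemma hoch_diff_scale: "hoch_diff \<rho> N (\<lambda>W. sm c (F W)) xs = sm c (hoch_diff \<rho> N F xs)"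
  by (simp add: hoch_diff_def V.scale_right_distrib V.scale_right_diff_distrib V.scale_sum_right
      scale_mult_left[symmetric] scale_mult_right[symmetric])

lemma cochain_zero: "cochain sm n (\<lambda>W. 0)"
  and cochain_deg_zero: "cochain_deg Rg n A (\<lambda>W. 0)"
  unfolding cochain_def cochain_deg_def by (auto intro: Rg_zero)

lemma cochain_add: "cochain sm n F \<Longrightarrow> cochain sm n G \<Longrightarrow> cochain sm n (\<lambda>W. F W + G W)"
  unfolding cochain_def by (auto simp: algebra_simps)

lemma cochain_scale: "cochain sm n F \<Longrightarrow> cochain sm n (\<lambda>W. sm c (F W))"
  unfolding cochain_def by (auto simp: V.scale_right_distrib V.scale_left_commute)

lemma cochain_sum: "(\<And>i. i \<in> I \<Longrightarrow> cochain sm n (F i)) \<Longrightarrow> cochain sm n (\<lambda>W. \<Sum>i\<in>I. F i W)"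
  by (induction I rule: infinite_finite_induct) (simp_all add: cochain_zero cochain_add)

lemma cochain_deg_add:
  "cochain_deg Rg n A F \<Longrightarrow> cochain_deg Rg n A G \<Longrightarrow> cochain_deg Rg n A (\<lambda>W. F W + G W)"
  unfolding cochain_deg_def by (auto intro: Rg_add)

lemma cochain_deg_scale: "cochain_deg Rg n A F \<Longrightarrow> cochain_deg Rg n A (\<lambda>W. sm c (F W))"
  unfolding cochain_deg_def by (auto intro: Rg_scale)

lemma cochain_deg_sum:
  "(\<And>i. i \<in> I \<Longrightarrow> cochain_deg Rg n A (F i)) \<Longrightarrow> cochain_deg Rg n A (\<lambda>W. \<Sum>i\<in>I. F i W)"
  unfolding cochain_deg_def by (auto intro: Rg_sum)

lemma gerstenhaber_homotopy_eq_sum: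
  "gerstenhaber_homotopy g h (twist b) p q = (\<lambda>W. \<Sum>i<q. sm ((-1) ^ (i * (p + 1)))
     (if length W = p + q - 1 then g (cochain_insertion.insertion h (twist b) p i W) else 0))"
  by (auto simp: fun_eq_iff gerstenhaber_homotopy_def scale_neg_one_power)

lemma cochain_insertion_arg:
  assumes h: "cochain sm p h" and g: "cochain sm q g" and i: "i < q"
  shows "cochain sm (p + q - 1)
    (\<lambda>W. if length W = p + q - 1 then g (cochain_insertion.insertion h (twist b) p i W) else 0)"
  unfolding cochain_def
proof (intro allI impI conjI)
  fix W :: "'r list" and k x y c
  assume W: "length W = p + q - 1" and k: "k < p + q - 1"
  interpret cochain_insertion h "twist b" p .
  have q: "length (insertion i W) = q" using i W length_insertion[of i W] by simp
  consider "k < i" | "i \<le> k" "k < i + p" | "i + p \<le> k" by linarith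
  then have "g (insertion i (W[k := x + y])) = g (insertion i (W[k := x])) + g (insertion i (W[k := y])) \<and>
    g (insertion i (W[k := sm c x])) = sm c (g (insertion i (W[k := x])))"
  proof cases
    case 1
    then show ?thesis using i W q
      by (simp add: insertion_update_before cochain_add_arg[OF g] cochain_scale_arg[OF g])
  next
    case 2
    then have "length (take p (drop i W)) = p" "k - i < p" using i W by auto
    with 2 show ?thesis using i W q
      by (simp add: insertion_update_inside cochain_add_arg[OF h] cochain_scale_arg[OF h]
          cochain_add_arg[OF g] cochain_scale_arg[OF g])
  next
    case 3
    then have "Suc k - p < q" using k by simp
    with 3 show ?thesis using k W q
      by (simp add: insertion_update_after twist_add twist_scale cochain_add_arg[OF g] cochain_scale_arg[OF g])
  qed
  then show "(if length (W[k := x + y]) = p + q - 1 then g (insertion i (W[k := x + y])) else 0) =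
      (if length (W[k := x]) = p + q - 1 then g (insertion i (W[k := x])) else 0) +
      (if length (W[k := y]) = p + q - 1 then g (insertion i (W[k := y])) else 0)"
    and "(if length (W[k := sm c x]) = p + q - 1 then g (insertion i (W[k := sm c x])) else 0) =
      sm c (if length (W[k := x]) = p + q - 1 then g (insertion i (W[k := x])) else 0)"
    using W by auto
qed auto

lemma cochain_deg_insertion_arg:
  assumes h: "cochain_deg Rg p a h" and g: "cochain_deg Rg q a' g" and i: "i < q"
  shows "cochain_deg Rg (p + q - 1) (a + a')
    (\<lambda>W. if length W = p + q - 1 then g (cochain_insertion.insertion h (twist b) p i W) else 0)"
  unfolding cochain_deg_def
proof (intro allI impI)
  fix xs ds assume len: "length xs = p + q - 1" "length ds = p + q - 1"
    and homogeneous: "\<forall>j<p + q - 1. xs ! j \<in> Rg (ds ! j)"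
  interpret cochain_insertion h "twist b" p .
  define ds' where "ds' = take i ds @ [a + sum_list (take p (drop i ds))] @ drop (i + p) ds"
  have "h (take p (drop i xs)) \<in> Rg (a + sum_list (take p (drop i ds)))"
    using h i len homogeneous unfolding cochain_deg_def by (auto simp: add.commute add.left_commute)
  then have "\<forall>j<q. insertion i xs ! j \<in> Rg (ds' ! j)"
    using i len homogeneous
    by (auto simp: insertion_def ds'_def nth_append nth_Cons' twist_in_Rg)
  moreover have "length (insertion i xs) = q" "length ds' = q"
    using i len by (simp_all add: length_insertion ds'_def)
  ultimately have "g (insertion i xs) \<in> Rg (a' + sum_list ds')"
    using g unfolding cochain_deg_def by blast
  moreover have "sum_list ds = sum_list (take i ds) + sum_list (take p (drop i ds)) + sum_list (drop (i + p) ds)"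
    by (metis append_take_drop_id drop_drop sum_list_append add.assoc add.commute[of p i])
  ultimately show "(if length xs = p + q - 1 then g (insertion i xs) else 0) \<in> Rg (a + a' + sum_list ds)"
    using len by (simp add: ds'_def algebra_simps)
qed

lemma cochain_gerstenhaber_homotopy:
  "cochain sm p h \<Longrightarrow> cochain sm q g \<Longrightarrow> cochain sm (p + q - 1) (gerstenhaber_homotopy g h (twist b) p q)"
  unfolding gerstenhaber_homotopy_eq_sum
  by (intro cochain_sum cochain_scale cochain_insertion_arg) auto

lemma cochain_deg_gerstenhaber_homotopy:
  "cochain_deg Rg p a h \<Longrightarrow> cochain_deg Rg q a' g \<Longrightarrow>
   cochain_deg Rg (p + q - 1) (a + a') (gerstenhaber_homotopy g h (twist b) p q)"
  unfolding gerstenhaber_homotopy_eq_sum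
  by (intro cochain_deg_sum cochain_deg_scale cochain_deg_insertion_arg) auto

end

section \<open>Graded commutativity of the twisted cup product\<close>

context twisted_graded_algebra
begin

definition coboundary :: "('r \<Rightarrow> 'r) \<Rightarrow> nat \<Rightarrow> 'a \<Rightarrow> ('r list \<Rightarrow> 'r) \<Rightarrow> bool" where
  "coboundary \<rho> N A F \<longleftrightarrow>
     (if N = 0 then F = (\<lambda>_. 0)
      else (\<exists>h. cochain sm (N - 1) h \<and> cochain_deg Rg (N - 1) A h \<and> F = hoch_diff \<rho> (N - 1) h))"

lemma hoch_cohomologous_iff_coboundary:
  "hoch_cohomologous sm Rg \<rho> N A F G \<longleftrightarrow> coboundary \<rho> N A (\<lambda>xs. F xs - G xs)"
  unfolding hoch_cohomologous_def coboundary_def by (auto simp: fun_eq_iff)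

lemma coboundary_zero: "coboundary \<rho> N A (\<lambda>_. 0)"
proof -
  have "hoch_diff \<rho> (N - 1) (\<lambda>_. 0) = (\<lambda>_. 0)" by (simp add: fun_eq_iff hoch_diff_def)
  then show ?thesis unfolding coboundary_def using cochain_zero cochain_deg_zero by metis
qed

lemma coboundary_add:
  assumes "coboundary \<rho> N A F" "coboundary \<rho> N A G"
  shows "coboundary \<rho> N A (\<lambda>xs. F xs + G xs)"
proof (cases "N = 0")
  case False
  then obtain h1 h2 where
    "cochain sm (N - 1) h1" "cochain_deg Rg (N - 1) A h1" "F = hoch_diff \<rho> (N - 1) h1"
    "cochain sm (N - 1) h2" "cochain_deg Rg (N - 1) A h2" "G = hoch_diff \<rho> (N - 1) h2"
    using assms unfolding coboundary_def by auto
  then have "cochain sm (N - 1) (\<lambda>W. h1 W + h2 W) \<and> cochain_deg Rg (N - 1) A (\<lambda>W. h1 W + h2 W) \<and>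
      (\<lambda>xs. F xs + G xs) = hoch_diff \<rho> (N - 1) (\<lambda>W. h1 W + h2 W)"
    by (simp add: cochain_add cochain_deg_add hoch_diff_add fun_eq_iff)
  then show ?thesis unfolding coboundary_def using False by auto
qed (use assms in \<open>simp add: coboundary_def\<close>)

lemma coboundary_scale:
  assumes "coboundary \<rho> N A F"
  shows "coboundary \<rho> N A (\<lambda>xs. sm c (F xs))"
proof (cases "N = 0")
  case False
  then obtain h where "cochain sm (N - 1) h" "cochain_deg Rg (N - 1) A h" "F = hoch_diff \<rho> (N - 1) h"
    using assms unfolding coboundary_def by auto
  then show ?thesis
    unfolding coboundary_def using False
    by (auto intro!: exI[of _ "\<lambda>W. sm c (h W)"] simp: cochain_scale cochain_deg_scale hoch_diff_scale fun_eq_iff)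
qed (use assms in \<open>simp add: coboundary_def\<close>)

lemma twisted_cup_degree_zero_right:
  assumes "hoch_cocycle sm Rg (twist b') 0 a' f'"
  shows "twisted_cup sm Rg t m b f 0 f' X = sm (t a' b) (twisted_cup sm Rg t 0 b' f' m f X)"
proof -
  have "f' [] \<in> Rg a'" and "hoch_diff (twist b') 0 f' [f X] = 0"
    using assms unfolding hoch_cocycle_def cochain_deg_def by auto
  then show ?thesis
    by (simp add: twisted_cup_def hoch_diff_def twist_homogeneous scale_mult_right[symmetric])
qed

lemma sign_scale_identity:
  fixes P M :: 'r and s :: 'k
  assumes "s \<noteq> 0"
  shows "(-1) ^ (m * m') * P - sm ((-1) ^ (m * m') * s) ((-1) ^ (m' * m) * M) =
    sm ((-1) ^ (m + m * m') * s) ((-1) ^ m * sm (inverse s) P - (-1) ^ (m * Suc m') * M)"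
proof -
  have "sm s (sm (inverse s) P) = P" using assms by simp
  then show ?thesis
    by (cases "even m"; cases "even m'")
      (simp_all add: assms V.scale_right_diff_distrib V.scale_right_distrib mult.commute[of m' m])
qed

lemma twisted_cup_minus_swap_eq_hoch_diff:
  assumes f: "hoch_cocycle sm Rg (twist b) m a f" and f': "hoch_cocycle sm Rg (twist b') m' a' f'"
    and m': "1 \<le> m'"
  shows "twisted_cup sm Rg t m b f m' f' X - sm ((-1) ^ (m * m') * t a' b) (twisted_cup sm Rg t m' b' f' m f X) =
    hoch_diff (twist (b + b')) (m + m' - 1)
      (\<lambda>W. sm ((-1) ^ (m + m * m') * t a' b) (gerstenhaber_homotopy f' f (twist b) m m' W)) X"
proof (cases "length X = m + m'")
  case False
  then show ?thesis using m' by (simp add: twisted_cup_def hoch_diff_def)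
next
  case True
  have "cochain sm m' f'" "cochain_deg Rg m' a' f'"
    using f' unfolding hoch_cocycle_def by auto
  note twist_args = cochain_twist_args[OF this]
  interpret homotopy_expansion f "twist b" m f' "twist b'" m' X
  proof
    show "length W = m' \<Longrightarrow> i < m' \<Longrightarrow> f' (W[i := x + y]) = f' (W[i := x]) + f' (W[i := y])"
      and "length W = m' \<Longrightarrow> i < m' \<Longrightarrow> f' (W[i := 0]) = 0" for W i x y
      using f' unfolding hoch_cocycle_def by (auto simp: cochain_add_arg cochain_zero_arg)
    show "length Y = Suc m' \<Longrightarrow> hoch_diff (twist b') m' f' Y = 0"
      and "length V = Suc m \<Longrightarrow> hoch_diff (twist b) m f V = 0" for Y V
      using f f' unfolding hoch_cocycle_def by auto
  qed (use m' True in \<open>simp_all add: twist_mult\<close>)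
  let ?c = "(-1) ^ (m + m * m') * t a' b"
  have "twist (b + b') = twist b' \<circ> twist b" by (simp add: fun_eq_iff twist_plus)
  then have "hoch_diff (twist (b + b')) (m + m' - 1) (\<lambda>W. sm ?c (gerstenhaber_homotopy f' f (twist b) m m' W)) X
      = sm ?c (hoch_diff (twist b' \<circ> twist b) (m + m' - 1) (gerstenhaber_homotopy f' f (twist b) m m') X)"
    by (simp only: hoch_diff_scale)
  also have "\<dots> = sm ?c ((-1) ^ m * sm (inverse (t a' b)) (f (take m X) * twist b (f' (drop m X)))
      - (-1) ^ (m * Suc m') * (f' (take m' X) * twist b' (f (drop m' X))))"
    by (simp only: hoch_diff_gerstenhaber_homotopy twist_args scale_mult_right)
  finally show ?thesis
    using True by (simp add: twisted_cup_def sign_scale_identity t_nonzero)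
qed

lemma twisted_cup_graded_commutative:
  assumes f: "hoch_cocycle sm Rg (twist b) m a f" and f': "hoch_cocycle sm Rg (twist b') m' a' f'"
  shows "hoch_cohomologous sm Rg (twist (b + b')) (m + m') (a + a')
           (twisted_cup sm Rg t m b f m' f')
           (\<lambda>xs. sm ((-1) ^ (m * m') * t a' b) (twisted_cup sm Rg t m' b' f' m f xs))"
proof (cases "m' = 0")
  case True
  then have "(\<lambda>xs. twisted_cup sm Rg t m b f m' f' xs
      - sm ((-1) ^ (m * m') * t a' b) (twisted_cup sm Rg t m' b' f' m f xs)) = (\<lambda>_. 0)"
    using twisted_cup_degree_zero_right[of b' a' f'] f' by simp
  then show ?thesis
    unfolding hoch_cohomologous_iff_coboundary by (simp only: coboundary_zero)
next
  case False
  let ?H = "\<lambda>W. sm ((-1) ^ (m + m * m') * t a' b) (gerstenhaber_homotopy f' f (twist b) m m' W)"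
  have "cochain sm (m + m' - 1) ?H"
    by (rule cochain_scale, rule cochain_gerstenhaber_homotopy) (use f f' in \<open>simp_all add: hoch_cocycle_def\<close>)
  moreover have "cochain_deg Rg (m + m' - 1) (a + a') ?H"
    by (rule cochain_deg_scale, rule cochain_deg_gerstenhaber_homotopy)
      (use f f' in \<open>simp_all add: hoch_cocycle_def\<close>)
  moreover have "(\<lambda>xs. twisted_cup sm Rg t m b f m' f' xs
      - sm ((-1) ^ (m * m') * t a' b) (twisted_cup sm Rg t m' b' f' m f xs))
      = hoch_diff (twist (b + b')) (m + m' - 1) ?H"
    using twisted_cup_minus_swap_eq_hoch_diff[OF f f'] False by (simp add: fun_eq_iff)
  ultimately show ?thesis
    unfolding hoch_cohomologous_iff_coboundary coboundary_def using False by auto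
qed

lemma twisted_cup_cohomologous_zero:
  assumes f: "hoch_cocycle sm Rg (twist b) m a f" and f': "hoch_cocycle sm Rg (twist b') m' a' f'"
    and t: "t a' b \<noteq> inverse (t a b')"
  shows "hoch_cohomologous sm Rg (twist (b + b')) (m + m') (a + a') (twisted_cup sm Rg t m b f m' f') (\<lambda>_. 0)"
proof -
  let ?B = "coboundary (twist (b + b')) (m + m') (a + a')"
  let ?c = "twisted_cup sm Rg t m b f m' f'" and ?c' = "twisted_cup sm Rg t m' b' f' m f"
  let ?s = "(-1::'k) ^ (m * m')" and ?u = "1 - t a' b * t a b'"
  have "?B (\<lambda>xs. ?c xs - sm (?s * t a' b) (?c' xs))"
    using twisted_cup_graded_commutative[OF f f'] unfolding hoch_cohomologous_iff_coboundary .
  moreover have "?B (\<lambda>xs. ?c' xs - sm (?s * t a b') (?c xs))"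
    using twisted_cup_graded_commutative[OF f' f]
    unfolding hoch_cohomologous_iff_coboundary by (simp add: add.commute mult.commute)
  ultimately have "?B (\<lambda>xs. (?c xs - sm (?s * t a' b) (?c' xs)) + sm (?s * t a' b) (?c' xs - sm (?s * t a b') (?c xs)))"
    by (intro coboundary_add coboundary_scale)
  moreover have "?s * ?s = 1" by (simp flip: power_add)
  ultimately have "?B (\<lambda>xs. sm ?u (?c xs))"
    by (simp add: algebra_simps)
  then have "?B (\<lambda>xs. sm (inverse ?u) (sm ?u (?c xs)))"
    by (rule coboundary_scale)
  moreover have "?u \<noteq> 0" using t t_nonzero[of a b'] by (auto simp: field_simps)
  ultimately show ?thesis unfolding hoch_cohomologous_iff_coboundary by simp
qed

end

theorem proposition4p1:
  fixes sm :: "'k::field \<Rightarrow> 'r::ring_1 \<Rightarrow> 'r"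
    and Rg :: "'a::ab_group_add \<Rightarrow> 'r set"
    and t :: "'a \<Rightarrow> 'b::ab_group_add \<Rightarrow> 'k"
    and f f' :: "'r list \<Rightarrow> 'r"
    and m m' :: nat and a a' :: 'a and b b' :: 'b
  assumes "graded_k_algebra sm Rg"
    and "bicharacter t"
    and "hoch_cocycle sm Rg (bhat sm Rg t b) m a f"
    and "hoch_cocycle sm Rg (bhat sm Rg t b') m' a' f'"
  shows "hoch_cohomologous sm Rg (bhat sm Rg t (b + b')) (m + m') (a + a')
           (twisted_cup sm Rg t m b f m' f')
           (\<lambda>xs. sm ((-1) ^ (m * m') * t a' b) (twisted_cup sm Rg t m' b' f' m f xs))
       \<and> (t a' b \<noteq> inverse (t a b') \<longrightarrow>
           hoch_cohomologous sm Rg (bhat sm Rg t (b + b')) (m + m') (a + a')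
             (twisted_cup sm Rg t m b f m' f') (\<lambda>_. 0))"
proof -
  interpret twisted_graded_algebra sm Rg t
    using assms(1,2) by unfold_locales
  show ?thesis
    using twisted_cup_graded_commutative[OF assms(3,4)] twisted_cup_cohomologous_zero[OF assms(3,4)]
    by blast
qed

end
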